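(* Let $d,k\ge 1$, let $A\in\mathbb{R}^{k\times d}$ (a linear "style extractor"), let $y_1\in\mathbb{R}^k$ (reference style features), let $x_0\in\mathbb{R}^d$, let $0\le t_0<1$, let $\gamma>0$, and assume that $A^TA$ is invertible. Consider the deterministic optimal control problem $$\min_{u\in\mathcal{U}}\ \int_{t_0}^{1}\frac12\|u(X^u_t,t)\|^2\,dt+\frac{\gamma}{2}\|AX^u_1-y_1\|_2^2,\qquad\text{where } \mathrm{d}X^u_t=u(X^u_t,t)\,\mathrm{d}t,\quad X^u_{t_0}=x_0 .$$ Then, in the limit $\gamma\to\infty$, the optimal controller is $$u^*(x_t,t)=\frac{(A^TA)^{-1}A^T\,(y_1-Ax_t)}{1-t},$$ where $x_t$ denotes the current state $X^u_t$, which yields the controlled dynamic $$\mathrm{d}X^u_t=\frac{(A^TA)^{-1}A^T\,(y_1-AX^u_t)}{1-t}\,\mathrm{d}t .$$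
   Context: $\mathcal{U}$ denotes the admissible set of (feedback) controllers $u:\mathbb{R}^d\times[0,1]\to\mathbb{R}^d$. For a controller $u$, $X^u_t\in\mathbb{R}^d$ is the state trajectory generated by the stated dynamics. The optimal controller is the minimizer of the stated cost (computed via the Hamilton–Jacobi–Bellman equation / minimum principle), and "in the limit $\gamma\to\infty$" refers to the limit of this optimal controller as the terminal-cost weight $\gamma$ tends to infinity. *)

theory Defs
  imports "HOL-Analysis.Analysis"
begin

definition is_trajectory ::
  "(real^'d \<Rightarrow> real \<Rightarrow> real^'d) \<Rightarrow> real \<Rightarrow> real^'d \<Rightarrow> (real \<Rightarrow> real^'d) \<Rightarrow> bool" where
  "is_trajectory u s x X \<longleftrightarrow> X s = x \<and>
     (\<forall>t\<in>{s..1}. (X has_vector_derivative u (X t) t) (at t within {s..1}))"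

definition admissible :: "(real^'d \<Rightarrow> real \<Rightarrow> real^'d) \<Rightarrow> bool" where
  "admissible u \<longleftrightarrow> continuous_on (UNIV \<times> {0..1}) (\<lambda>(x,t). u x t) \<and>
     (\<forall>x. \<forall>s\<in>{0..<1}. \<exists>X. is_trajectory u s x X \<and>
          (\<forall>Y. is_trajectory u s x Y \<longrightarrow> (\<forall>t\<in>{s..1}. Y t = X t)))"

definition traj ::
  "(real^'d \<Rightarrow> real \<Rightarrow> real^'d) \<Rightarrow> real \<Rightarrow> real^'d \<Rightarrow> real \<Rightarrow> real^'d" where
  "traj u s x = (SOME X. is_trajectory u s x X)"

definition cost ::
  "real^'d^'k \<Rightarrow> real^'k \<Rightarrow> real \<Rightarrow> (real^'d \<Rightarrow> real \<Rightarrow> real^'d) \<Rightarrow> real \<Rightarrow> real^'d \<Rightarrow> real" where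
  "cost A y \<gamma> u s x =
     integral {s..1} (\<lambda>t. (1/2) * (norm (u (traj u s x t) t))\<^sup>2)
     + (\<gamma>/2) * (norm (A *v traj u s x 1 - y))\<^sup>2"

definition optimal_from ::
  "real^'d^'k \<Rightarrow> real^'k \<Rightarrow> real \<Rightarrow> (real^'d \<Rightarrow> real \<Rightarrow> real^'d) \<Rightarrow> real \<Rightarrow> real^'d \<Rightarrow> bool" where
  "optimal_from A y \<gamma> u s x \<longleftrightarrow> admissible u \<and>
     (\<forall>v. admissible v \<longrightarrow> cost A y \<gamma> u s x \<le> cost A y \<gamma> v s x)"

end

theory Submission
  imports Defs
begin

(* For fixed gamma the problem is linear-quadratic and its optimal paths are straight lines.
   By Jensen's inequality, an admissible controller whose trajectory from (x, s) has mean velocity m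
   costs at least the straight-line cost (1 - s)/2 |m|^2 + gamma/2 |A (x + (1 - s) m) - y|^2, with
   equality only if its velocity is constantly m. This strictly convex quadratic is minimised by the
   solution v of (I + gamma (1 - s) A^T A) v = gamma A^T (y - A x), and the feedback (x, s) |-> v keeps
   its velocity along its own straight trajectories, so it is optimal from every initial condition
   and every optimal controller agrees with it. Dividing by gamma,
   v = (gamma^-1 I + (1 - s) A^T A)^-1 A^T (y - A x), which tends to ((1 - s) A^T A)^-1 A^T (y - A x)
   as gamma tends to infinity because A^T A is invertible. *)

lemma matrix_inv_right:
  fixes P :: "'a::semiring_1^'n^'m"
  assumes "invertible P"
  shows "P ** matrix_inv P = mat 1"
  using someI_ex[OF assms[unfolded invertible_def]] unfolding matrix_inv_def by blast

lemma matrix_vector_mul_matrix_inv: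
  fixes P :: "'a::semiring_1^'n^'m"
  assumes "invertible P"
  shows "P *v (matrix_inv P *v b) = b"
  using assms by (simp add: matrix_vector_mul_assoc matrix_inv_right)

lemma matrix_inv_mult_vector_eqI:
  fixes P :: "real^'n^'n"
  assumes "invertible P" and "P *v w = b"
  shows "matrix_inv P *v b = w"
proof -
  have "P *v (matrix_inv P *v b) = P *v w"
    using assms by (simp add: matrix_vector_mul_matrix_inv)
  then show ?thesis
    using inj_matrix_vector_mult[OF assms(1)] by (auto dest: injD)
qed

lemma invertible_if_inner_pos:
  fixes P :: "real^'n^'n"
  assumes "\<And>w. w \<noteq> 0 \<Longrightarrow> 0 < w \<bullet> (P *v w)"
  shows "invertible P"
proof -
  have "\<forall>w. P *v w = 0 \<longrightarrow> w = 0"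
    using assms by force
  then show ?thesis
    using matrix_left_invertible_ker invertible_left_inverse by blast
qed

lemma inner_transpose_mult_vector:
  fixes A :: "real^'n^'m"
  shows "w \<bullet> (transpose A *v z) = (A *v w) \<bullet> z"
  by (metis dot_lmul_matrix vector_transpose_matrix)

lemma continuous_on_det:
  fixes F :: "'a::topological_space \<Rightarrow> real^'n^'n"
  assumes "continuous_on S F"
  shows "continuous_on S (\<lambda>p. det (F p))"
  unfolding det_def
  by (intro continuous_on_sum continuous_on_mult continuous_on_const continuous_on_prod
      continuous_on_component assms)

lemma continuous_on_matrix_inv_mult_vector:
  fixes F :: "'a::topological_space \<Rightarrow> real^'n^'n"
  assumes F: "continuous_on S F" and b: "continuous_on S b"
    and inv: "\<And>p. p \<in> S \<Longrightarrow> invertible (F p)"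
  shows "continuous_on S (\<lambda>p. matrix_inv (F p) *v b p)"
proof -
  let ?cramer = "\<lambda>p. \<chi> k. det (\<chi> i j. if j = k then b p $ i else F p $ i $ j) / det (F p)"
  have det_nz: "\<forall>p\<in>S. det (F p) \<noteq> 0"
    using inv invertible_det_nz by blast
  have "continuous_on S (\<lambda>p. if j = k then b p $ i else F p $ i $ j)" for i j k
    by (cases "j = k") (simp_all add: continuous_on_component F b)
  then have "continuous_on S ?cramer"
    by (intro continuous_on_vec_lambda continuous_on_divide continuous_on_det
        continuous_on_component F det_nz)
  moreover have "matrix_inv (F p) *v b p = ?cramer p" if "p \<in> S" for p
  proof -
    have "F p *v (matrix_inv (F p) *v b p) = b p"
      using inv[OF that] by (rule matrix_vector_mul_matrix_inv)
    then show ?thesis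
      using cramer det_nz that by blast
  qed
  ultimately show ?thesis
    using continuous_on_cong by fastforce
qed

definition straight_cost ::
    "real^'d^'k \<Rightarrow> real^'k \<Rightarrow> real \<Rightarrow> real \<Rightarrow> real^'d \<Rightarrow> real^'d \<Rightarrow> real" where
  "straight_cost A y \<gamma> s x m =
     (1 - s) / 2 * (norm m)\<^sup>2 + \<gamma> / 2 * (norm (A *v (x + (1 - s) *\<^sub>R m) - y))\<^sup>2"

definition gain_matrix :: "real^'d^'k \<Rightarrow> real \<Rightarrow> real \<Rightarrow> real^'d^'d" where
  "gain_matrix A \<gamma> t = mat 1 + (\<gamma> * (1 - t)) *\<^sub>R (transpose A ** A)"

text \<open>The minimiser of \<open>straight_cost A y \<gamma> t x\<close>, whose normal equation is
  \<open>gain_matrix A \<gamma> t *v v = \<gamma> *\<^sub>R (transpose A *v (y - A *v x))\<close>.\<close>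

definition optimal_feedback :: "real^'d^'k \<Rightarrow> real^'k \<Rightarrow> real \<Rightarrow> real^'d \<Rightarrow> real \<Rightarrow> real^'d" where
  "optimal_feedback A y \<gamma> x t =
     matrix_inv (gain_matrix A \<gamma> t) *v (\<gamma> *\<^sub>R (transpose A *v (y - A *v x)))"

lemma gain_matrix_mult_vector:
  "gain_matrix A \<gamma> t *v w = w + (\<gamma> * (1 - t)) *\<^sub>R (transpose A *v (A *v w))"
  by (simp add: gain_matrix_def algebra_simps scaleR_matrix_vector_assoc matrix_vector_mul_assoc)

lemma inner_gain_matrix:
  "w \<bullet> (gain_matrix A \<gamma> t *v z) = w \<bullet> z + (\<gamma> * (1 - t)) * ((A *v w) \<bullet> (A *v z))"
  unfolding gain_matrix_mult_vector inner_add_right inner_scaleR_right inner_transpose_mult_vector ..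

lemma invertible_gain_matrix:
  assumes "0 \<le> \<gamma>" and "t \<le> 1"
  shows "invertible (gain_matrix A \<gamma> t)"
  by (rule invertible_if_inner_pos) (use assms in \<open>simp add: inner_gain_matrix add_pos_nonneg\<close>)

lemma gain_matrix_optimal_feedback:
  assumes "0 \<le> \<gamma>" and "t \<le> 1"
  shows "gain_matrix A \<gamma> t *v optimal_feedback A y \<gamma> x t = \<gamma> *\<^sub>R (transpose A *v (y - A *v x))"
  unfolding optimal_feedback_def
  by (rule matrix_vector_mul_matrix_inv[OF invertible_gain_matrix[OF assms]])

lemma optimal_feedback_eqI:
  assumes "0 \<le> \<gamma>" and "t \<le> 1"
    and "gain_matrix A \<gamma> t *v w = \<gamma> *\<^sub>R (transpose A *v (y - A *v x))"
  shows "optimal_feedback A y \<gamma> x t = w"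
  unfolding optimal_feedback_def
  by (rule matrix_inv_mult_vector_eqI[OF invertible_gain_matrix[OF assms(1,2)] assms(3)])

lemma gain_matrix_optimal_feedback_diff:
  assumes "0 \<le> \<gamma>" and "t \<le> 1"
  shows "gain_matrix A \<gamma> t *v (optimal_feedback A y \<gamma> x t - optimal_feedback A y \<gamma> x' t)
           = - \<gamma> *\<^sub>R (transpose A *v (A *v (x - x')))"
  by (simp add: matrix_vector_mult_diff_distrib gain_matrix_optimal_feedback[OF assms] algebra_simps)

lemma optimal_feedback_along_line:
  assumes "0 \<le> \<gamma>" and "s \<le> 1" and "t \<le> 1"
  shows "optimal_feedback A y \<gamma> (x + (t - s) *\<^sub>R optimal_feedback A y \<gamma> x s) t
           = optimal_feedback A y \<gamma> x s"
proof (rule optimal_feedback_eqI[OF assms(1,3)])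
  let ?v = "optimal_feedback A y \<gamma> x s"
  have "gain_matrix A \<gamma> s *v ?v = \<gamma> *\<^sub>R (transpose A *v (y - A *v x))"
    by (rule gain_matrix_optimal_feedback[OF assms(1,2)])
  then show "gain_matrix A \<gamma> t *v ?v = \<gamma> *\<^sub>R (transpose A *v (y - A *v (x + (t - s) *\<^sub>R ?v)))"
    by (simp add: gain_matrix_mult_vector algebra_simps)
qed

lemma continuous_on_optimal_feedback:
  assumes "0 \<le> \<gamma>"
  shows "continuous_on (UNIV \<times> {0..1}) (\<lambda>(x, t). optimal_feedback A y \<gamma> x t)"
proof -
  have "continuous_on (UNIV \<times> {0..1}) (\<lambda>p. gain_matrix A \<gamma> (snd p))"
    unfolding gain_matrix_def by (intro continuous_intros)
  moreover have "continuous_on (UNIV \<times> {0..1}) (\<lambda>p. \<gamma> *\<^sub>R (transpose A *v (y - A *v fst p)))"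
    by (intro continuous_intros bounded_linear.continuous_on[OF matrix_vector_mul_bounded_linear])
  ultimately have "continuous_on (UNIV \<times> {0..1})
          (\<lambda>p. matrix_inv (gain_matrix A \<gamma> (snd p)) *v (\<gamma> *\<^sub>R (transpose A *v (y - A *v fst p))))"
    using assms by (intro continuous_on_matrix_inv_mult_vector invertible_gain_matrix) auto
  then show ?thesis
    by (simp add: optimal_feedback_def split_def)
qed

lemma is_trajectory_optimal_feedback_line:
  assumes "0 \<le> \<gamma>" and "s \<le> 1"
  shows "is_trajectory (optimal_feedback A y \<gamma>) s x (\<lambda>t. x + (t - s) *\<^sub>R optimal_feedback A y \<gamma> x s)"
  unfolding is_trajectory_def
proof (intro conjI ballI)
  fix t assume "t \<in> {s..1}"
  then show "((\<lambda>t. x + (t - s) *\<^sub>R optimal_feedback A y \<gamma> x s) has_vector_derivative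
      optimal_feedback A y \<gamma> (x + (t - s) *\<^sub>R optimal_feedback A y \<gamma> x s) t) (at t within {s..1})"
    by (auto intro!: derivative_eq_intros simp: optimal_feedback_along_line[OF assms])
qed simp

lemma has_vector_derivative_nonpos_imp_le:
  fixes E :: "real \<Rightarrow> real"
  assumes deriv: "\<And>t. t \<in> {a..b} \<Longrightarrow> (E has_vector_derivative E' t) (at t within {a..b})"
    and nonpos: "\<And>t. t \<in> {a..b} \<Longrightarrow> E' t \<le> 0" and t: "t \<in> {a..b}"
  shows "E t \<le> E a"
proof -
  have "(E has_vector_derivative E' u) (at u within {a..t})" if "u \<in> {a..t}" for u
    by (rule has_vector_derivative_within_subset[OF deriv]) (use that t in auto)
  then have "(E' has_integral (E t - E a)) {a..t}"
    using t by (intro fundamental_theorem_of_calculus) auto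
  then have "E t - E a \<le> 0"
    using has_integral_le[OF _ has_integral_0, of E' "E t - E a" "{a..t}"] nonpos t by auto
  then show ?thesis by simp
qed

lemma is_trajectory_optimal_feedback_unique:
  assumes \<gamma>: "0 \<le> \<gamma>" and s: "s \<le> 1"
    and Y: "is_trajectory (optimal_feedback A y \<gamma>) s x Y"
    and Z: "is_trajectory (optimal_feedback A y \<gamma>) s x Z" and t: "t \<in> {s..1}"
  shows "Y t = Z t"
proof -
  define D where "D t = Y t - Z t" for t
  define D' where "D' t = optimal_feedback A y \<gamma> (Y t) t - optimal_feedback A y \<gamma> (Z t) t" for t
  define E where "E t = D t \<bullet> D t + (\<gamma> * (1 - t)) * ((A *v D t) \<bullet> (A *v D t))" for t
  txt \<open>The energy \<open>E = D \<bullet> (gain_matrix A \<gamma> t *v D)\<close> has derivative \<open>-3 \<gamma> |A D|\<^sup>2\<close>.\<close>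
  have dE: "(E has_vector_derivative - 3 * \<gamma> * ((A *v D t) \<bullet> (A *v D t))) (at t within {s..1})"
    if t: "t \<in> {s..1}" for t
  proof -
    have dD: "(D has_vector_derivative D' t) (at t within {s..1})"
      using Y Z t unfolding is_trajectory_def D_def[abs_def] D'_def
      by (auto intro!: has_vector_derivative_diff)
    have dAD: "((\<lambda>t. A *v D t) has_vector_derivative A *v D' t) (at t within {s..1})"
      by (rule bounded_linear.has_vector_derivative[OF matrix_vector_mul_bounded_linear dD])
    have "D t \<bullet> (gain_matrix A \<gamma> t *v D' t) = - \<gamma> * ((A *v D t) \<bullet> (A *v D t))"
      using gain_matrix_optimal_feedback_diff[OF \<gamma>, of t A y "Y t" "Z t"] t
      by (simp add: D_def D'_def inner_transpose_mult_vector del: transpose_matrix_vector)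
    then have key: "D t \<bullet> D' t + (\<gamma> * (1 - t)) * ((A *v D t) \<bullet> (A *v D' t))
        = - \<gamma> * ((A *v D t) \<bullet> (A *v D t))"
      by (simp add: inner_gain_matrix)
    have "((\<lambda>t. \<gamma> * (1 - t)) has_vector_derivative - \<gamma>) (at t within {s..1})"
      by (auto intro!: derivative_eq_intros)
    from has_vector_derivative_add[OF
        bounded_bilinear.has_vector_derivative[OF bounded_bilinear_inner dD dD]
        has_vector_derivative_mult[OF this
          bounded_bilinear.has_vector_derivative[OF bounded_bilinear_inner dAD dAD]]]
    show ?thesis
      unfolding E_def[abs_def]
      by (rule has_vector_derivative_eq_rhs) (use key in \<open>simp add: inner_commute algebra_simps\<close>)
  qed
  have "E t \<le> E s"
    using \<gamma> t by (intro has_vector_derivative_nonpos_imp_le[OF dE]) auto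
  moreover have "E s = 0"
    using Y Z unfolding E_def D_def is_trajectory_def by simp
  moreover have "D t \<bullet> D t \<le> E t"
    using \<gamma> t by (simp add: E_def)
  ultimately have "D t \<bullet> D t = 0"
    using inner_ge_zero[of "D t"] by linarith
  then have "D t = 0"
    by simp
  then show ?thesis by (simp add: D_def)
qed

lemma admissible_optimal_feedback:
  assumes "0 \<le> \<gamma>"
  shows "admissible (optimal_feedback A y \<gamma>)"
  unfolding admissible_def
proof (intro conjI allI ballI continuous_on_optimal_feedback[OF assms])
  fix x and s :: real assume "s \<in> {0..<1}"
  then show "\<exists>X. is_trajectory (optimal_feedback A y \<gamma>) s x X \<and>
      (\<forall>Y. is_trajectory (optimal_feedback A y \<gamma>) s x Y \<longrightarrow> (\<forall>t\<in>{s..1}. Y t = X t))"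
    using assms is_trajectory_optimal_feedback_line is_trajectory_optimal_feedback_unique
    by (metis atLeastLessThan_iff less_eq_real_def)
qed

lemma traj_optimal_feedback:
  assumes "0 \<le> \<gamma>" and "s \<le> 1" and "t \<in> {s..1}"
  shows "traj (optimal_feedback A y \<gamma>) s x t = x + (t - s) *\<^sub>R optimal_feedback A y \<gamma> x s"
proof (rule is_trajectory_optimal_feedback_unique[OF assms(1,2) _ _ assms(3)])
  show "is_trajectory (optimal_feedback A y \<gamma>) s x (traj (optimal_feedback A y \<gamma>) s x)"
    using is_trajectory_optimal_feedback_line[OF assms(1,2), of A y x]
    unfolding traj_def by (rule someI[of "is_trajectory _ s x"])
qed (rule is_trajectory_optimal_feedback_line[OF assms(1,2)])

lemma cost_optimal_feedback:
  assumes "0 \<le> \<gamma>" and "s \<le> 1"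
  shows "cost A y \<gamma> (optimal_feedback A y \<gamma>) s x
           = straight_cost A y \<gamma> s x (optimal_feedback A y \<gamma> x s)"
proof -
  let ?v = "optimal_feedback A y \<gamma> x s"
  have "integral {s..1} (\<lambda>t. 1/2 * (norm (optimal_feedback A y \<gamma> (traj (optimal_feedback A y \<gamma>) s x t) t))\<^sup>2)
      = integral {s..1} (\<lambda>t. 1/2 * (norm ?v)\<^sup>2)"
    using assms by (intro integral_cong) (simp add: traj_optimal_feedback optimal_feedback_along_line)
  also have "\<dots> = (1 - s) / 2 * (norm ?v)\<^sup>2"
    using assms(2) by simp
  finally show ?thesis
    using assms traj_optimal_feedback[OF assms, of 1 A y x]
    by (simp add: cost_def straight_cost_def)
qed

lemma straight_cost_expand:
  fixes A :: "real^'d^'k" and y :: "real^'k" and x m :: "real^'d"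
  assumes "0 \<le> \<gamma>" and "s \<le> 1"
  defines "v \<equiv> optimal_feedback A y \<gamma> x s"
  shows "straight_cost A y \<gamma> s x m = straight_cost A y \<gamma> s x v
           + (1 - s) / 2 * (norm (m - v))\<^sup>2 + \<gamma> / 2 * ((1 - s)\<^sup>2 * (norm (A *v (m - v)))\<^sup>2)"
proof -
  define \<delta> where "\<delta> = m - v"
  define a where "a = A *v \<delta>"
  define r where "r = A *v (x + (1 - s) *\<^sub>R v) - y"
  have "gain_matrix A \<gamma> s *v v = \<gamma> *\<^sub>R (transpose A *v (y - A *v x))"
    unfolding v_def by (rule gain_matrix_optimal_feedback[OF assms(1,2)])
  then have "v = - \<gamma> *\<^sub>R (transpose A *v r)"
    by (simp add: r_def gain_matrix_mult_vector algebra_simps)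
  then have cross: "\<delta> \<bullet> v = - \<gamma> * (a \<bullet> r)"
    by (simp add: a_def inner_transpose_mult_vector del: transpose_matrix_vector)
  have m_eq: "m = v + \<delta>"
    by (simp add: \<delta>_def)
  have "A *v (x + (1 - s) *\<^sub>R m) - y = r + (1 - s) *\<^sub>R a"
    by (simp add: r_def a_def \<delta>_def algebra_simps)
  moreover have "(norm m)\<^sup>2 = (norm v)\<^sup>2 + 2 * (\<delta> \<bullet> v) + (norm \<delta>)\<^sup>2"
    unfolding m_eq power2_norm_eq_inner by (simp add: inner_add_left inner_add_right inner_commute)
  moreover have "(norm (r + (1 - s) *\<^sub>R a))\<^sup>2 = (norm r)\<^sup>2 + 2 * (1 - s) * (a \<bullet> r) + (1 - s)\<^sup>2 * (norm a)\<^sup>2"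
    unfolding power2_norm_eq_inner
    by (simp add: inner_add_left inner_add_right inner_commute power2_eq_square algebra_simps)
  ultimately have "straight_cost A y \<gamma> s x m
      = (1 - s) / 2 * ((norm v)\<^sup>2 + 2 * (\<delta> \<bullet> v) + (norm \<delta>)\<^sup>2)
        + \<gamma> / 2 * ((norm r)\<^sup>2 + 2 * (1 - s) * (a \<bullet> r) + (1 - s)\<^sup>2 * (norm a)\<^sup>2)"
    by (simp only: straight_cost_def)
  also have "\<dots> = straight_cost A y \<gamma> s x v + (1 - s) / 2 * (norm \<delta>)\<^sup>2 + \<gamma> / 2 * ((1 - s)\<^sup>2 * (norm a)\<^sup>2)"
    unfolding straight_cost_def r_def[symmetric] cross by (simp add: field_simps)
  finally show ?thesis
    by (simp add: \<delta>_def a_def)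
qed

lemma straight_cost_ge:
  assumes "0 \<le> \<gamma>" and "s \<le> 1"
  shows "straight_cost A y \<gamma> s x (optimal_feedback A y \<gamma> x s)
           + (1 - s) / 2 * (norm (m - optimal_feedback A y \<gamma> x s))\<^sup>2
         \<le> straight_cost A y \<gamma> s x m"
  using straight_cost_expand[OF assms, of A y x m] assms(1) by simp

lemma is_trajectory_traj:
  assumes "admissible W" and "0 \<le> s" and "s < 1"
  shows "is_trajectory W s x (traj W s x)"
proof -
  have "\<exists>X. is_trajectory W s x X"
    using assms unfolding admissible_def by fastforce
  then show ?thesis
    unfolding traj_def by (rule someI_ex)
qed

lemma continuous_on_closed_loop_velocity:
  assumes "admissible W" and "is_trajectory W s x X" and "0 \<le> s"
  shows "continuous_on {s..1} (\<lambda>t. W (X t) t)"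
proof -
  have "continuous_on {s..1} X"
    using assms(2) has_vector_derivative_continuous
    unfolding is_trajectory_def continuous_on_eq_continuous_within by blast
  then have "continuous_on {s..1} (\<lambda>t. (X t, t))"
    by (intro continuous_intros)
  moreover have "continuous_on (UNIV \<times> {0..1}) (\<lambda>(x, t). W x t)"
    using assms(1) unfolding admissible_def by blast
  ultimately have "continuous_on {s..1} ((\<lambda>(x, t). W x t) \<circ> (\<lambda>t. (X t, t)))"
    using assms(3) by (elim continuous_on_compose continuous_on_subset) auto
  then show ?thesis
    by (simp add: o_def)
qed

text \<open>Jensen's inequality for the running cost, with its defect made explicit.\<close>

lemma cost_eq_deviation_plus_straight_cost:
  fixes W :: "real^'d \<Rightarrow> real \<Rightarrow> real^'d" and x :: "real^'d"
  assumes adm: "admissible W" and s: "0 \<le> s" "s < 1"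
  defines "V \<equiv> \<lambda>t. W (traj W s x t) t"
    and "m \<equiv> (1 / (1 - s)) *\<^sub>R (traj W s x 1 - x)"
  shows "cost A y \<gamma> W s x = integral {s..1} (\<lambda>t. 1/2 * (norm (V t - m))\<^sup>2) + straight_cost A y \<gamma> s x m"
proof -
  let ?X = "traj W s x"
  have X: "is_trajectory W s x ?X"
    by (rule is_trajectory_traj[OF adm s])
  have cV: "continuous_on {s..1} V"
    unfolding V_def by (rule continuous_on_closed_loop_velocity[OF adm X s(1)])
  have X1: "?X 1 = x + (1 - s) *\<^sub>R m"
    using s by (simp add: m_def)
  have "(V has_integral (?X 1 - ?X s)) {s..1}"
    using X s unfolding is_trajectory_def V_def by (intro fundamental_theorem_of_calculus) auto
  then have "(V has_integral (1 - s) *\<^sub>R m) {s..1}"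
    using X X1 by (simp add: is_trajectory_def)
  from has_integral_linear[OF this bounded_linear_inner_left[of m]]
  have mean: "((\<lambda>t. V t \<bullet> m) has_integral (1 - s) * (norm m)\<^sup>2) {s..1}"
    by (simp add: o_def power2_norm_eq_inner)
  have "continuous_on {s..1} (\<lambda>t. 1/2 * (norm (V t - m))\<^sup>2)"
    by (intro continuous_intros cV)
  then have deviation: "((\<lambda>t. 1/2 * (norm (V t - m))\<^sup>2) has_integral
      integral {s..1} (\<lambda>t. 1/2 * (norm (V t - m))\<^sup>2)) {s..1}"
    using integrable_continuous_interval by blast
  have const: "((\<lambda>t. 1/2 * (norm m)\<^sup>2) has_integral (1 - s) * (1/2 * (norm m)\<^sup>2)) {s..1}"
    using has_integral_const_real[of "1/2 * (norm m)\<^sup>2" s 1] s by simp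
  have split: "1/2 * (norm (V t))\<^sup>2 = 1/2 * (norm (V t - m))\<^sup>2 + V t \<bullet> m - 1/2 * (norm m)\<^sup>2" for t
    by (simp add: power2_norm_eq_inner inner_diff_left inner_diff_right inner_commute algebra_simps)
  have "((\<lambda>t. 1/2 * (norm (V t))\<^sup>2) has_integral
      integral {s..1} (\<lambda>t. 1/2 * (norm (V t - m))\<^sup>2) + (1 - s) * (norm m)\<^sup>2 - (1 - s) * (1/2 * (norm m)\<^sup>2)) {s..1}"
    unfolding split by (intro has_integral_diff has_integral_add deviation mean const)
  then have "integral {s..1} (\<lambda>t. 1/2 * (norm (V t))\<^sup>2)
      = integral {s..1} (\<lambda>t. 1/2 * (norm (V t - m))\<^sup>2) + (1 - s) * (norm m)\<^sup>2 - (1 - s) * (1/2 * (norm m)\<^sup>2)"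
    by (rule integral_unique)
  then show ?thesis
    unfolding cost_def straight_cost_def V_def X1[symmetric] by (simp add: field_simps)
qed

lemma cost_optimal_feedback_le:
  fixes W :: "real^'d \<Rightarrow> real \<Rightarrow> real^'d" and x :: "real^'d"
  assumes \<gamma>: "0 \<le> \<gamma>" and adm: "admissible W" and s: "0 \<le> s" "s < 1"
  defines "V \<equiv> \<lambda>t. W (traj W s x t) t"
    and "m \<equiv> (1 / (1 - s)) *\<^sub>R (traj W s x 1 - x)"
  shows "cost A y \<gamma> (optimal_feedback A y \<gamma>) s x + integral {s..1} (\<lambda>t. 1/2 * (norm (V t - m))\<^sup>2)
           + (1 - s) / 2 * (norm (m - optimal_feedback A y \<gamma> x s))\<^sup>2
         \<le> cost A y \<gamma> W s x"
  using straight_cost_ge[OF \<gamma>, of s A y x m] cost_optimal_feedback[OF \<gamma>, of s A y x] s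
    cost_eq_deviation_plus_straight_cost[OF adm s, of A y \<gamma>]
  unfolding V_def m_def by simp

lemma optimal_from_optimal_feedback:
  fixes A :: "real^'d^'k"
  assumes "0 \<le> \<gamma>" and "0 \<le> s" and "s < 1"
  shows "optimal_from A y \<gamma> (optimal_feedback A y \<gamma>) s x"
  unfolding optimal_from_def
proof (intro conjI allI impI admissible_optimal_feedback[OF assms(1)])
  fix W :: "real^'d \<Rightarrow> real \<Rightarrow> real^'d" assume adm: "admissible W"
  define m where "m = (1 / (1 - s)) *\<^sub>R (traj W s x 1 - x)"
  define f where "f t = 1/2 * (norm (W (traj W s x t) t - m))\<^sup>2" for t
  have "0 \<le> integral {s..1} f"
    by (cases "f integrable_on {s..1}") (simp_all add: integral_nonneg not_integrable_integral f_def)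
  moreover have "0 \<le> (1 - s) / 2 * (norm (m - optimal_feedback A y \<gamma> x s))\<^sup>2"
    using assms(3) by simp
  moreover note cost_optimal_feedback_le[OF assms(1) adm assms(2,3), of A y x,
      folded m_def, folded f_def[abs_def]]
  ultimately show "cost A y \<gamma> (optimal_feedback A y \<gamma>) s x \<le> cost A y \<gamma> W s x"
    by linarith
qed

text \<open>Equality in \<open>cost_optimal_feedback_le\<close> forces the mean velocity of an optimal controller to
  be the optimal feedback and its velocity to be constant, in particular at the initial time.\<close>

lemma optimal_from_imp_eq_optimal_feedback:
  fixes W :: "real^'d \<Rightarrow> real \<Rightarrow> real^'d" and x :: "real^'d"
  assumes \<gamma>: "0 \<le> \<gamma>" and s: "0 \<le> s" "s < 1" and opt: "optimal_from A y \<gamma> W s x"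
  shows "W x s = optimal_feedback A y \<gamma> x s"
proof -
  define V where "V t = W (traj W s x t) t" for t
  define m where "m = (1 / (1 - s)) *\<^sub>R (traj W s x 1 - x)"
  define f where "f t = 1/2 * (norm (V t - m))\<^sup>2" for t
  have adm: "admissible W"
    using opt by (simp add: optimal_from_def)
  have X: "is_trajectory W s x (traj W s x)"
    by (rule is_trajectory_traj[OF adm s])
  have "continuous_on {s..1} f"
    unfolding f_def V_def
    by (intro continuous_intros continuous_on_closed_loop_velocity[OF adm X s(1)])
  then have int0_iff: "integral {s..1} f = 0 \<longleftrightarrow> (\<forall>t\<in>{s..1}. f t = 0)"
    using s by (intro integral_eq_0_iff) (auto simp: f_def)
  have "0 \<le> integral {s..1} f"
    using integrable_continuous_interval[OF \<open>continuous_on {s..1} f\<close>]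
    by (rule integral_nonneg) (simp add: f_def)
  moreover have "cost A y \<gamma> W s x \<le> cost A y \<gamma> (optimal_feedback A y \<gamma>) s x"
    using opt admissible_optimal_feedback[OF \<gamma>, of A y] by (simp add: optimal_from_def)
  moreover note cost_optimal_feedback_le[OF \<gamma> adm s, of A y x, folded V_def m_def, folded f_def[abs_def]]
  moreover have "0 \<le> (1 - s) / 2 * (norm (m - optimal_feedback A y \<gamma> x s))\<^sup>2"
    using s by simp
  ultimately have "integral {s..1} f = 0" and "(1 - s) / 2 * (norm (m - optimal_feedback A y \<gamma> x s))\<^sup>2 = 0"
    by linarith+
  then have "f s = 0" and "m = optimal_feedback A y \<gamma> x s"
    using int0_iff s by auto
  moreover have "V s = W x s"
    using X by (simp add: V_def is_trajectory_def)
  ultimately show ?thesis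
    by (simp add: f_def)
qed

lemma invertible_regularized_gram:
  fixes A :: "real^'d^'k"
  assumes "0 \<le> \<epsilon>" and "0 < c" and inv: "invertible (transpose A ** A)"
  shows "invertible (\<epsilon> *\<^sub>R mat 1 + c *\<^sub>R (transpose A ** A))"
proof (rule invertible_if_inner_pos)
  fix w :: "real^'d" assume "w \<noteq> 0"
  then have "(transpose A ** A) *v w \<noteq> 0"
    using inj_matrix_vector_mult[OF inv] by (metis injD matrix_vector_mult_0_right)
  then have "A *v w \<noteq> 0"
    by (metis matrix_vector_mul_assoc matrix_vector_mult_0_right)
  moreover have "(\<epsilon> *\<^sub>R mat 1 + c *\<^sub>R (transpose A ** A)) *v w
      = \<epsilon> *\<^sub>R w + c *\<^sub>R (transpose A *v (A *v w))"
    by (simp add: matrix_vector_mult_add_rdistrib scaleR_matrix_vector_assoc[symmetric]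
        matrix_vector_mul_assoc[symmetric] del: transpose_matrix_vector)
  then have "w \<bullet> ((\<epsilon> *\<^sub>R mat 1 + c *\<^sub>R (transpose A ** A)) *v w)
      = \<epsilon> * (w \<bullet> w) + c * ((A *v w) \<bullet> (A *v w))"
    by (simp only: inner_add_right inner_scaleR_right inner_transpose_mult_vector)
  ultimately show "0 < w \<bullet> ((\<epsilon> *\<^sub>R mat 1 + c *\<^sub>R (transpose A ** A)) *v w)"
    using assms(1,2) by (simp add: add_nonneg_pos)
qed

text \<open>For \<open>\<gamma> > 0\<close> the optimal feedback solves the system with matrix
  \<open>\<gamma>\<^sup>-\<^sup>1 I + (1 - t) A\<^sup>T A\<close>, which depends continuously on \<open>\<gamma>\<^sup>-\<^sup>1 \<in> [0, \<infinity>)\<close> and stays invertible at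
  \<open>\<gamma>\<^sup>-\<^sup>1 = 0\<close>.\<close>

lemma optimal_feedback_tendsto:
  fixes A :: "real^'d^'k"
  assumes inv: "invertible (transpose A ** A)" and t: "t < 1"
  shows "((\<lambda>\<gamma>. optimal_feedback A y \<gamma> x t) \<longlongrightarrow>
           (1 / (1 - t)) *\<^sub>R (matrix_inv (transpose A ** A) *v (transpose A *v (y - A *v x)))) at_top"
proof -
  define M where "M = transpose A ** A"
  define b where "b = transpose A *v (y - A *v x)"
  define R where "R \<epsilon> = \<epsilon> *\<^sub>R mat 1 + (1 - t) *\<^sub>R M" for \<epsilon> :: real
  have R_inv: "invertible (R \<epsilon>)" if "0 \<le> \<epsilon>" for \<epsilon>
    using that t inv unfolding R_def M_def by (intro invertible_regularized_gram) auto
  have "continuous_on {0..} (\<lambda>\<epsilon>. matrix_inv (R \<epsilon>) *v b)"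
    using R_inv unfolding R_def by (intro continuous_on_matrix_inv_mult_vector continuous_intros) auto
  then have "((\<lambda>\<epsilon>. matrix_inv (R \<epsilon>) *v b) \<longlongrightarrow> matrix_inv (R 0) *v b) (at_right 0)"
    by (auto simp: continuous_on_def intro: tendsto_within_subset)
  then have "((\<lambda>\<gamma>. matrix_inv (R (inverse \<gamma>)) *v b) \<longlongrightarrow> matrix_inv (R 0) *v b) at_top"
    by (rule filterlim_compose[OF _ filterlim_inverse_at_right_top])
  moreover have "matrix_inv (R 0) *v b = (1 / (1 - t)) *\<^sub>R (matrix_inv M *v b)"
  proof (rule matrix_inv_mult_vector_eqI[OF R_inv[of 0]])
    have "M *v (matrix_inv M *v b) = b"
      unfolding M_def by (rule matrix_vector_mul_matrix_inv[OF inv])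
    then show "R 0 *v ((1 / (1 - t)) *\<^sub>R (matrix_inv M *v b)) = b"
      using t by (simp add: R_def scaleR_matrix_vector_assoc[symmetric] matrix_vector_mult_scaleR)
  qed simp
  moreover have "\<forall>\<^sub>F \<gamma> in at_top. matrix_inv (R (inverse \<gamma>)) *v b = optimal_feedback A y \<gamma> x t"
    using eventually_gt_at_top[of 0]
  proof eventually_elim
    case (elim \<gamma>)
    have "gain_matrix A \<gamma> t = \<gamma> *\<^sub>R R (inverse \<gamma>)"
      using elim by (simp add: gain_matrix_def R_def M_def algebra_simps)
    moreover have "R (inverse \<gamma>) *v (matrix_inv (R (inverse \<gamma>)) *v b) = b"
      using R_inv elim by (simp add: matrix_vector_mul_matrix_inv)
    ultimately have "gain_matrix A \<gamma> t *v (matrix_inv (R (inverse \<gamma>)) *v b) = \<gamma> *\<^sub>R b"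
      by (simp add: scaleR_matrix_vector_assoc[symmetric])
    then show ?case
      using elim t by (intro optimal_feedback_eqI[symmetric]) (auto simp: b_def)
  qed
  ultimately show ?thesis
    unfolding M_def b_def by (auto intro: Lim_transform_eventually)
qed

theorem proposition1:
  fixes A :: "real^'d^'k" and y1 :: "real^'k" and x0 :: "real^'d" and t0 :: real
  assumes "0 \<le> t0" and "t0 < 1" and "invertible (transpose A ** A)"
  shows "(\<forall>\<gamma>>0. \<exists>u. optimal_from A y1 \<gamma> u t0 x0 \<and>
                (\<forall>x. \<forall>s\<in>{t0..<1}. optimal_from A y1 \<gamma> u s x))
       \<and> (\<forall>U. (\<forall>\<gamma>>0. optimal_from A y1 \<gamma> (U \<gamma>) t0 x0 \<and>
                     (\<forall>x. \<forall>s\<in>{t0..<1}. optimal_from A y1 \<gamma> (U \<gamma>) s x)) \<longrightarrow>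
              (\<forall>x. \<forall>t\<in>{t0..<1}.
                 ((\<lambda>\<gamma>. U \<gamma> x t) \<longlongrightarrow>
                   (1 / (1 - t)) *\<^sub>R (matrix_inv (transpose A ** A) *v (transpose A *v (y1 - A *v x))))
                 at_top))"
proof (intro conjI allI impI ballI)
  fix \<gamma> :: real assume "\<gamma> > 0"
  then show "\<exists>u. optimal_from A y1 \<gamma> u t0 x0 \<and> (\<forall>x. \<forall>s\<in>{t0..<1}. optimal_from A y1 \<gamma> u s x)"
    using assms(1,2) by (intro exI[of _ "optimal_feedback A y1 \<gamma>"]) (auto intro: optimal_from_optimal_feedback)
next
  fix U :: "real \<Rightarrow> real^'d \<Rightarrow> real \<Rightarrow> real^'d" and x t
  assume U: "\<forall>\<gamma>>0. optimal_from A y1 \<gamma> (U \<gamma>) t0 x0 \<and> (\<forall>x. \<forall>s\<in>{t0..<1}. optimal_from A y1 \<gamma> (U \<gamma>) s x)"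
    and t: "t \<in> {t0..<1}"
  have "\<forall>\<^sub>F \<gamma> in at_top. optimal_feedback A y1 \<gamma> x t = U \<gamma> x t"
    using eventually_gt_at_top[of 0]
    by eventually_elim (use U t assms(1) in \<open>auto intro: optimal_from_imp_eq_optimal_feedback[symmetric]\<close>)
  with optimal_feedback_tendsto[OF assms(3)] t
  show "((\<lambda>\<gamma>. U \<gamma> x t) \<longlongrightarrow>
      (1 / (1 - t)) *\<^sub>R (matrix_inv (transpose A ** A) *v (transpose A *v (y1 - A *v x)))) at_top"
    by (auto intro: Lim_transform_eventually)
qed

end
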